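(* Let $R$ be a commutative ring with identity and let $M$ be a non-zero comultiplication $R$-module. A submodule $N$ of $M$ is a large submodule of $M$ if and only if $\mathrm{Soc}(M)\subseteq N$.
   Context: An $R$-module $M$ is a comultiplication module if for every submodule $N$ of $M$ there is an ideal $I$ of $R$ with $N=\mathrm{Ann}_M(I)=\{m\in M: Im=0\}$. A submodule $N$ of $M$ is large (essential) in $M$ if $N\cap L\neq 0$ for every non-zero submodule $L$ of $M$. $\mathrm{Min}(M)$ denotes the set of minimal (i.e. simple) submodules of $M$, and $\mathrm{Soc}(M)$ denotes the sum of all minimal submodules of $M$. *)

theory Defs
  imports "HOL-Algebra.Module" "HOL-Algebra.Ideal"
begin

definition ann_mod :: "('a, 'c) ring_scheme \<Rightarrow> ('a, 'b, 'd) module_scheme \<Rightarrow> 'a set \<Rightarrow> 'b set" where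
  "ann_mod R M I = {m \<in> carrier M. \<forall>r\<in>I. r \<odot>\<^bsub>M\<^esub> m = \<zero>\<^bsub>M\<^esub>}"

definition comultiplication_module :: "('a, 'c) ring_scheme \<Rightarrow> ('a, 'b, 'd) module_scheme \<Rightarrow> bool" where
  "comultiplication_module R M \<longleftrightarrow> module R M \<and>
     (\<forall>N. submodule N R M \<longrightarrow> (\<exists>I. ideal I R \<and> N = ann_mod R M I))"

definition large_submodule :: "('a, 'c) ring_scheme \<Rightarrow> ('a, 'b, 'd) module_scheme \<Rightarrow> 'b set \<Rightarrow> bool" where
  "large_submodule R M N \<longleftrightarrow> submodule N R M \<and>
     (\<forall>L. submodule L R M \<longrightarrow> L \<noteq> {\<zero>\<^bsub>M\<^esub>} \<longrightarrow> N \<inter> L \<noteq> {\<zero>\<^bsub>M\<^esub>})"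

definition min_submodules :: "('a, 'c) ring_scheme \<Rightarrow> ('a, 'b, 'd) module_scheme \<Rightarrow> 'b set set" where
  "min_submodules R M = {L. submodule L R M \<and> L \<noteq> {\<zero>\<^bsub>M\<^esub>} \<and>
     (\<forall>K. submodule K R M \<longrightarrow> K \<subseteq> L \<longrightarrow> K = {\<zero>\<^bsub>M\<^esub>} \<or> K = L)}"

text \<open>Socle: the sum of all minimal submodules, i.e. the smallest submodule containing all of them
  (equal to the zero submodule if there are none).\<close>
definition socle :: "('a, 'c) ring_scheme \<Rightarrow> ('a, 'b, 'd) module_scheme \<Rightarrow> 'b set" where
  "socle R M = \<Inter>{K. submodule K R M \<and> \<Union>(min_submodules R M) \<subseteq> K}"

end

theory Submission
  imports "HOL-Algebra.Ring_Divisibility" Defs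
begin

text \<open>
  The socle of a comultiplication module M is essential. Given x \<noteq> 0, choose a maximal ideal P
  containing Ann(x). Then x \<notin> Px, and writing the submodule Px as Ann_M(I) yields r \<in> I with
  rx \<noteq> 0; since r(Px) = 0, P annihilates rx, so R rx \<cong> R/P is simple. In any module with
  essential socle, a submodule N is large iff it contains every simple submodule: a large N meets
  each simple S non-trivially, hence contains it, and conversely every non-zero submodule contains
  a simple one, which lies in N.
\<close>

lemma (in ring) exists_maximalideal_superset:
  assumes "ideal A R" and "A \<noteq> carrier R"
  shows "\<exists>P. maximalideal P R \<and> A \<subseteq> P"
proof -
  define S where "S = {I. ideal I R \<and> A \<subseteq> I \<and> \<one> \<notin> I}"
  have "\<exists>P\<in>S. \<forall>X\<in>S. P \<subseteq> X \<longrightarrow> X = P"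
  proof (rule subset_Zorn_nonempty)
    show "S \<noteq> {}"
      using assms ideal.one_imp_carrier unfolding S_def by blast
  next
    fix C assume "C \<noteq> {}" and chain: "subset.chain S C"
    then have "subset.chain {I. ideal I R} C"
      unfolding S_def pred_on.chain_def by blast
    then have "ideal (if C = {} then {\<zero>} else \<Union>C) R"
      by (rule chain_Union_is_ideal)
    then have "ideal (\<Union>C) R"
      using \<open>C \<noteq> {}\<close> by simp
    then show "\<Union>C \<in> S"
      using \<open>C \<noteq> {}\<close> chain unfolding S_def pred_on.chain_def by auto
  qed
  then obtain P where "P \<in> S" and P_max: "\<And>X. X \<in> S \<Longrightarrow> P \<subseteq> X \<Longrightarrow> X = P"
    by auto
  have "maximalideal P R"
  proof (rule maximalidealI)
    show "ideal P R" "carrier R \<noteq> P"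
      using \<open>P \<in> S\<close> unfolding S_def by auto
    fix J assume "ideal J R" "P \<subseteq> J" "J \<subseteq> carrier R"
    then show "J = P \<or> J = carrier R"
      using P_max[of J] \<open>P \<in> S\<close> ideal.one_imp_carrier unfolding S_def by blast
  qed
  then show ?thesis
    using \<open>P \<in> S\<close> unfolding S_def by auto
qed

lemma (in cring) maximalideal_add_cgenideal:
  assumes "maximalideal P R" and s: "s \<in> carrier R" "s \<notin> P"
  shows "P <+>\<^bsub>R\<^esub> PIdl s = carrier R"
proof -
  interpret maximalideal P R by fact
  have Rs: "ideal (PIdl s) R"
    using cgenideal_ideal[OF s(1)] .
  have sub: "P \<union> PIdl s \<subseteq> P <+>\<^bsub>R\<^esub> PIdl s"
    unfolding union_genideal[OF is_ideal Rs, symmetric] genideal_def by blast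
  have ideal: "ideal (P <+>\<^bsub>R\<^esub> PIdl s) R"
    using add_ideals[OF is_ideal Rs] .
  have "P <+>\<^bsub>R\<^esub> PIdl s \<noteq> P"
    using sub cgenideal_self[OF s(1)] s(2) by blast
  moreover have "P <+>\<^bsub>R\<^esub> PIdl s \<subseteq> carrier R"
    using ideal.Icarr[OF ideal] by blast
  ultimately show ?thesis
    using I_maximal[OF ideal] sub by blast
qed

lemma min_submodulesD:
  "\<lbrakk>S \<in> min_submodules R M; submodule K R M; K \<subseteq> S; K \<noteq> {\<zero>\<^bsub>M\<^esub>}\<rbrakk> \<Longrightarrow> K = S"
  unfolding min_submodules_def by blast

lemma socle_subset_iff:
  "submodule N R M \<Longrightarrow> socle R M \<subseteq> N \<longleftrightarrow> (\<forall>S\<in>min_submodules R M. S \<subseteq> N)"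
  unfolding socle_def by blast

context Module.module
begin

lemma submodule_zero_closed: "submodule H R M \<Longrightarrow> \<zero>\<^bsub>M\<^esub> \<in> H"
  using subgroup.one_closed[OF submodule.axioms(1)] by fastforce

lemma submodule_Int:
  "submodule H R M \<Longrightarrow> submodule K R M \<Longrightarrow> submodule (H \<inter> K) R M"
  by (rule submoduleI) (auto dest: submoduleE simp: submodule_zero_closed)

lemma smult_left_commute:
  "\<lbrakk>a \<in> carrier R; b \<in> carrier R; x \<in> carrier M\<rbrakk>
    \<Longrightarrow> a \<odot>\<^bsub>M\<^esub> (b \<odot>\<^bsub>M\<^esub> x) = b \<odot>\<^bsub>M\<^esub> (a \<odot>\<^bsub>M\<^esub> x)"
  by (metis R.m_comm smult_assoc1)

lemma ideal_annihilator:
  assumes "x \<in> carrier M"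
  shows "ideal {a \<in> carrier R. a \<odot>\<^bsub>M\<^esub> x = \<zero>\<^bsub>M\<^esub>} R"
  by (rule idealI[OF R.ring_axioms], rule subgroup.intro)
    (auto simp: assms smult_l_distr smult_l_minus smult_assoc1 simp flip: a_inv_def,
      metis assms smult_left_commute smult_r_null)

lemma submodule_ideal_smult:
  assumes "ideal I R" and "x \<in> carrier M"
  shows "submodule {a \<odot>\<^bsub>M\<^esub> x | a. a \<in> I} R M"
proof -
  interpret ideal I R by fact
  show ?thesis
  proof (rule submoduleI)
    show "\<zero>\<^bsub>M\<^esub> \<in> {a \<odot>\<^bsub>M\<^esub> x | a. a \<in> I}"
      using assms(2) by (auto intro!: exI[of _ \<zero>])
    show "\<ominus>\<^bsub>M\<^esub> b \<in> {a \<odot>\<^bsub>M\<^esub> x | a. a \<in> I}" if "b \<in> {a \<odot>\<^bsub>M\<^esub> x | a. a \<in> I}" for b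
    proof -
      from that obtain a where "a \<in> I" "b = a \<odot>\<^bsub>M\<^esub> x" by blast
      then have "\<ominus>\<^bsub>M\<^esub> b = (\<ominus> a) \<odot>\<^bsub>M\<^esub> x" "\<ominus> a \<in> I"
        using assms(2) smult_l_minus by auto
      then show ?thesis by blast
    qed
    show "b \<oplus>\<^bsub>M\<^esub> c \<in> {a \<odot>\<^bsub>M\<^esub> x | a. a \<in> I}"
      if "b \<in> {a \<odot>\<^bsub>M\<^esub> x | a. a \<in> I}" "c \<in> {a \<odot>\<^bsub>M\<^esub> x | a. a \<in> I}" for b c
    proof -
      from that obtain a a' where "a \<in> I" "a' \<in> I" "b = a \<odot>\<^bsub>M\<^esub> x" "c = a' \<odot>\<^bsub>M\<^esub> x"
        by blast
      then have "b \<oplus>\<^bsub>M\<^esub> c = (a \<oplus> a') \<odot>\<^bsub>M\<^esub> x" "a \<oplus> a' \<in> I"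
        using assms(2) smult_l_distr by auto
      then show ?thesis by blast
    qed
    show "r \<odot>\<^bsub>M\<^esub> b \<in> {a \<odot>\<^bsub>M\<^esub> x | a. a \<in> I}"
      if "r \<in> carrier R" "b \<in> {a \<odot>\<^bsub>M\<^esub> x | a. a \<in> I}" for r b
    proof -
      from that obtain a where "a \<in> I" "b = a \<odot>\<^bsub>M\<^esub> x" by blast
      then have "r \<odot>\<^bsub>M\<^esub> b = (r \<otimes> a) \<odot>\<^bsub>M\<^esub> x" "r \<otimes> a \<in> I"
        using that(1) assms(2) smult_assoc1 I_l_closed by auto
      then show ?thesis by blast
    qed
  qed (use assms(2) in auto)
qed

lemma notin_ideal_smult_if_annihilator_subset:
  assumes "ideal P R" and "P \<noteq> carrier R" and x: "x \<in> carrier M"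
    and "{a \<in> carrier R. a \<odot>\<^bsub>M\<^esub> x = \<zero>\<^bsub>M\<^esub>} \<subseteq> P"
  shows "x \<notin> {p \<odot>\<^bsub>M\<^esub> x | p. p \<in> P}"
proof
  interpret ideal P R by fact
  assume "x \<in> {p \<odot>\<^bsub>M\<^esub> x | p. p \<in> P}"
  then obtain p where p: "p \<in> P" "p \<odot>\<^bsub>M\<^esub> x = x" by auto
  have "(\<one> \<ominus> p) \<odot>\<^bsub>M\<^esub> x = x \<oplus>\<^bsub>M\<^esub> \<ominus>\<^bsub>M\<^esub> x"
    using p x by (simp add: R.minus_eq smult_l_distr smult_l_minus)
  also have "\<dots> = \<zero>\<^bsub>M\<^esub>"
    using x by (simp add: M.r_neg)
  finally have "\<one> \<ominus> p \<in> P"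
    using assms(4) p(1) by auto
  then have "(\<one> \<ominus> p) \<oplus> p \<in> P"
    using p(1) by simp
  moreover have "(\<one> \<ominus> p) \<oplus> p = \<one>"
    using Icarr[OF p(1)] by (simp add: R.minus_eq R.a_assoc R.l_neg)
  ultimately show False
    using one_imp_carrier assms(2) by simp
qed

lemma comultiplication_multiple_annihilated_by_maximalideal:
  assumes comult: "comultiplication_module R M" and x: "x \<in> carrier M" "x \<noteq> \<zero>\<^bsub>M\<^esub>"
  obtains P r where "maximalideal P R" "r \<in> carrier R" "r \<odot>\<^bsub>M\<^esub> x \<noteq> \<zero>\<^bsub>M\<^esub>"
    "\<And>p. p \<in> P \<Longrightarrow> p \<odot>\<^bsub>M\<^esub> (r \<odot>\<^bsub>M\<^esub> x) = \<zero>\<^bsub>M\<^esub>"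
proof -
  let ?Ann = "{a \<in> carrier R. a \<odot>\<^bsub>M\<^esub> x = \<zero>\<^bsub>M\<^esub>}"
  have "\<one> \<notin> ?Ann"
    using x by simp
  then have "?Ann \<noteq> carrier R"
    using R.one_closed by blast
  then obtain P where P: "maximalideal P R" "?Ann \<subseteq> P"
    using R.exists_maximalideal_superset[OF ideal_annihilator[OF x(1)]] by blast
  interpret P: maximalideal P R by fact
  obtain I where I: "ideal I R" "{p \<odot>\<^bsub>M\<^esub> x | p. p \<in> P} = ann_mod R M I"
    using comult submodule_ideal_smult[OF P.is_ideal x(1)]
    unfolding comultiplication_module_def by blast
  have "x \<notin> ann_mod R M I"
    using notin_ideal_smult_if_annihilator_subset[OF P.is_ideal _ x(1) P(2)] P.I_notcarr I(2)
    by auto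
  then obtain r where r: "r \<in> I" "r \<odot>\<^bsub>M\<^esub> x \<noteq> \<zero>\<^bsub>M\<^esub>"
    using x(1) unfolding ann_mod_def by auto
  have r_carr: "r \<in> carrier R"
    using ideal.Icarr[OF I(1) r(1)] .
  have "p \<odot>\<^bsub>M\<^esub> (r \<odot>\<^bsub>M\<^esub> x) = \<zero>\<^bsub>M\<^esub>" if "p \<in> P" for p
  proof -
    have "p \<odot>\<^bsub>M\<^esub> x \<in> ann_mod R M I"
      using that I(2) by blast
    then have "r \<odot>\<^bsub>M\<^esub> (p \<odot>\<^bsub>M\<^esub> x) = \<zero>\<^bsub>M\<^esub>"
      using r(1) unfolding ann_mod_def by blast
    then show ?thesis
      using that r_carr x(1) by (simp add: smult_left_commute)
  qed
  then show ?thesis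
    using that P(1) r_carr r(2) by blast
qed

lemma cyclic_submodule_in_min_submodules:
  assumes P: "maximalideal P R" and y: "y \<in> carrier M" "y \<noteq> \<zero>\<^bsub>M\<^esub>"
    and ann: "\<And>p. p \<in> P \<Longrightarrow> p \<odot>\<^bsub>M\<^esub> y = \<zero>\<^bsub>M\<^esub>"
  shows "{a \<odot>\<^bsub>M\<^esub> y | a. a \<in> carrier R} \<in> min_submodules R M"
proof -
  let ?Ry = "{a \<odot>\<^bsub>M\<^esub> y | a. a \<in> carrier R}"
  have "y \<in> ?Ry"
    using y(1) by (auto intro!: exI[of _ \<one>])
  moreover have "K = ?Ry"
    if K: "submodule K R M" "K \<subseteq> ?Ry" "K \<noteq> {\<zero>\<^bsub>M\<^esub>}" for K
  proof -
    obtain k where k: "k \<in> K" "k \<noteq> \<zero>\<^bsub>M\<^esub>"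
      using K(3) submodule_zero_closed[OF K(1)] by blast
    then obtain s where s: "s \<in> carrier R" "k = s \<odot>\<^bsub>M\<^esub> y"
      using K(2) by blast
    then have "s \<notin> P"
      using k(2) ann by auto
    then have "\<one> \<in> P <+>\<^bsub>R\<^esub> PIdl s"
      using R.maximalideal_add_cgenideal[OF P s(1)] by simp
    then obtain p t where pt: "p \<in> P" "t \<in> carrier R" "\<one> = p \<oplus> t \<otimes> s"
      unfolding set_add_def' cgenideal_def by blast
    have p_carr: "p \<in> carrier R"
      using ideal.Icarr[OF maximalideal.axioms(1)[OF P] pt(1)] .
    have "y = (p \<oplus> t \<otimes> s) \<odot>\<^bsub>M\<^esub> y"
      using y(1) by (simp flip: pt(3))
    also have "\<dots> = p \<odot>\<^bsub>M\<^esub> y \<oplus>\<^bsub>M\<^esub> (t \<otimes> s) \<odot>\<^bsub>M\<^esub> y"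
      using p_carr pt(2) s(1) y(1) by (simp add: smult_l_distr)
    also have "\<dots> = t \<odot>\<^bsub>M\<^esub> k"
      using ann[OF pt(1)] pt(2) s y(1) by (simp add: smult_assoc1)
    finally have "y \<in> K"
      using submodule.smult_closed[OF K(1) pt(2) k(1)] by simp
    then have "?Ry \<subseteq> K"
      using submodule.smult_closed[OF K(1)] by blast
    then show "K = ?Ry"
      using K(2) by blast
  qed
  ultimately show ?thesis
    using submodule_ideal_smult[OF R.oneideal y(1)] y(2) unfolding min_submodules_def by auto
qed

lemma comultiplication_submodule_contains_min_submodule:
  assumes "comultiplication_module R M" and L: "submodule L R M" "L \<noteq> {\<zero>\<^bsub>M\<^esub>}"
  shows "\<exists>S\<in>min_submodules R M. S \<subseteq> L"
proof -
  obtain x where x: "x \<in> L" "x \<noteq> \<zero>\<^bsub>M\<^esub>"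
    using L(2) submodule_zero_closed[OF L(1)] by blast
  have x_carr: "x \<in> carrier M"
    using submoduleE(1)[OF L(1)] x(1) by (rule subsetD)
  show ?thesis
  proof (rule comultiplication_multiple_annihilated_by_maximalideal[OF assms(1) x_carr x(2)])
    fix P r assume P: "maximalideal P R" and r: "r \<in> carrier R" "r \<odot>\<^bsub>M\<^esub> x \<noteq> \<zero>\<^bsub>M\<^esub>"
      and ann: "\<And>p. p \<in> P \<Longrightarrow> p \<odot>\<^bsub>M\<^esub> (r \<odot>\<^bsub>M\<^esub> x) = \<zero>\<^bsub>M\<^esub>"
    have "r \<odot>\<^bsub>M\<^esub> x \<in> L"
      using submodule.smult_closed[OF L(1) r(1) x(1)] .
    then have "{a \<odot>\<^bsub>M\<^esub> (r \<odot>\<^bsub>M\<^esub> x) | a. a \<in> carrier R} \<subseteq> L"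
      using submodule.smult_closed[OF L(1)] by blast
    moreover have "{a \<odot>\<^bsub>M\<^esub> (r \<odot>\<^bsub>M\<^esub> x) | a. a \<in> carrier R} \<in> min_submodules R M"
      using cyclic_submodule_in_min_submodules[OF P _ r(2) ann] r(1) x_carr by simp
    ultimately show ?thesis
      by (rule bexI)
  qed
qed

lemma large_submodule_imp_socle_subset:
  assumes "large_submodule R M N"
  shows "socle R M \<subseteq> N"
proof -
  have "S \<subseteq> N" if S: "S \<in> min_submodules R M" for S
  proof -
    have "submodule S R M" "N \<inter> S \<noteq> {\<zero>\<^bsub>M\<^esub>}" "submodule N R M"
      using assms S unfolding large_submodule_def min_submodules_def by auto
    then have "N \<inter> S = S"
      using min_submodulesD[OF S] submodule_Int by blast
    then show ?thesis
      by blast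
  qed
  moreover have "submodule N R M"
    using assms unfolding large_submodule_def by simp
  ultimately show ?thesis
    by (simp add: socle_subset_iff)
qed

lemma socle_subset_imp_large_submodule:
  assumes N: "submodule N R M" "socle R M \<subseteq> N"
    and min_sub: "\<And>L. submodule L R M \<Longrightarrow> L \<noteq> {\<zero>\<^bsub>M\<^esub>} \<Longrightarrow> \<exists>S\<in>min_submodules R M. S \<subseteq> L"
  shows "large_submodule R M N"
  unfolding large_submodule_def
proof (intro conjI allI impI N(1))
  fix L assume "submodule L R M" "L \<noteq> {\<zero>\<^bsub>M\<^esub>}"
  then obtain S where S: "S \<in> min_submodules R M" "S \<subseteq> L"
    using min_sub by blast
  have "submodule S R M" "S \<noteq> {\<zero>\<^bsub>M\<^esub>}"
    using S(1) unfolding min_submodules_def by auto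
  then obtain s where s: "s \<in> S" "s \<noteq> \<zero>\<^bsub>M\<^esub>"
    using submodule_zero_closed by blast
  have "S \<subseteq> N"
    using N socle_subset_iff S(1) by blast
  then show "N \<inter> L \<noteq> {\<zero>\<^bsub>M\<^esub>}"
    using s S(2) by blast
qed

end

theorem lemma2p2:
  fixes R :: "('a, 'c) ring_scheme" and M :: "('a, 'b, 'd) module_scheme" and N :: "'b set"
  assumes "cring R"
    and "module R M"
    and "comultiplication_module R M"
    and "carrier M \<noteq> {\<zero>\<^bsub>M\<^esub>}"
    and "submodule N R M"
  shows "large_submodule R M N \<longleftrightarrow> socle R M \<subseteq> N"
proof
  interpret Module.module R M by fact
  show "socle R M \<subseteq> N" if "large_submodule R M N"
    using that by (rule large_submodule_imp_socle_subset)
  show "large_submodule R M N" if "socle R M \<subseteq> N"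
    using assms(5) that comultiplication_submodule_contains_min_submodule[OF assms(3)]
    by (rule socle_subset_imp_large_submodule)
qed

end
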